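(* Let $\mathbb P$ be a probability measure on $(\Omega,\mathcal F)$, $\delta>0$, and $\phi$ as in the context. For $A\in\mathcal F$ let $\overline{\mathbb Q}(A)=\sup_{\mathbb Q\in\mathcal P_\phi(\mathbb P,\delta)}\mathbb Q(A)$. Then $\overline{\mathbb Q}(A)=g_{\phi,\delta}(\mathbb P(A))$ for all $A\in\mathcal F$, where $g_{\phi,\delta}(0)=0$, $g_{\phi,\delta}(1)=1$ and $$g_{\phi,\delta}(x)=\sup\{t\in[x,1]: x\phi(t/x)+(1-x)\phi((1-t)/(1-x))\le\delta\},\quad x\in(0,1).$$ Moreover, if $\phi$ is real-valued (i.e. $\phi:[0,\infty)\to\mathbb R$), strictly convex, and $\lim_{x\to\infty}\phi(x)/x=\infty$, then there is a unique $x_\delta\in(0,1)$ solving $x\phi(1/x)+(1-x)\phi(0)=\delta$, the function $g_{\phi,\delta}$ is continuous and strictly increasing on $[0,x_\delta]$, $g_{\phi,\delta}(x)=1$ for $x\in[x_\delta,1]$, and for every $x\in(0,1)$ we have $g_{\phi,\delta}(x)>x$ and $g_{\phi,\delta}(x)\downarrow x$ as $\delta\downarrow0$.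
   Context: $\phi:[0,\infty)\to\mathbb R\cup\{\infty\}$ is convex with $\phi(1)=0$ and $\phi(0)=\lim_{x\downarrow0}\phi(x)$. For probability measures $\mathbb Q\ll\mathbb P$, the $\phi$-divergence is $D_\phi(\mathbb Q\|\mathbb P)=\mathbb E^{\mathbb P}[\phi(\mathrm d\mathbb Q/\mathrm d\mathbb P)]$, and $\mathcal P_\phi(\mathbb P,\delta)=\{\mathbb Q\ll\mathbb P: D_\phi(\mathbb Q\|\mathbb P)\le\delta\}$ for $\delta>0$. *)

theory Defs
  imports "HOL-Probability.Probability"
begin

text \<open>Admissible divergence generators: \<open>phi : [0,\<infinity>) \<rightarrow> \<real> \<union> {\<infinity>}\<close>, convex
  (in the extended sense), \<open>phi 1 = 0\<close>, and \<open>phi 0 = lim_{x \<down> 0} phi x\<close>.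
  Values of \<open>phi\<close> on negative reals are irrelevant.\<close>

definition convex_ext :: "(real \<Rightarrow> ereal) \<Rightarrow> bool" where
  "convex_ext phi \<longleftrightarrow>
     (\<forall>x\<ge>0. \<forall>y\<ge>0. \<forall>t\<in>{0..1}.
        phi (t * x + (1 - t) * y) \<le> ereal t * phi x + ereal (1 - t) * phi y)"

definition admissible_phi :: "(real \<Rightarrow> ereal) \<Rightarrow> bool" where
  "admissible_phi phi \<longleftrightarrow>
     (\<forall>x\<ge>0. phi x \<noteq> -\<infinity>) \<and> convex_ext phi \<and> phi 1 = 0 \<and>
     (phi \<longlongrightarrow> phi 0) (at_right 0)"

definition strictly_convex_ext :: "(real \<Rightarrow> ereal) \<Rightarrow> bool" where
  "strictly_convex_ext phi \<longleftrightarrow>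
     (\<forall>x\<ge>0. \<forall>y\<ge>0. x \<noteq> y \<longrightarrow> (\<forall>t\<in>{0<..<1}.
        phi (t * x + (1 - t) * y) < ereal t * phi x + ereal (1 - t) * phi y))"

text \<open>\<open>D_phi(Q\<parallel>P) = E^P[phi(dQ/dP)]\<close>, the expectation of an extended-real
  function taken as (integral of positive part) - (integral of negative part).\<close>

definition phi_div :: "(real \<Rightarrow> ereal) \<Rightarrow> 'a measure \<Rightarrow> 'a measure \<Rightarrow> ereal" where
  "phi_div phi Q P =
     enn2ereal (\<integral>\<^sup>+ w. e2ennreal (phi (enn2real (RN_deriv P Q w))) \<partial>P)
     - enn2ereal (\<integral>\<^sup>+ w. e2ennreal (- phi (enn2real (RN_deriv P Q w))) \<partial>P)"

definition phi_ball :: "(real \<Rightarrow> ereal) \<Rightarrow> 'a measure \<Rightarrow> real \<Rightarrow> 'a measure set" where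
  "phi_ball phi P \<delta> =
     {Q. sets Q = sets P \<and> prob_space Q \<and> absolutely_continuous P Q \<and>
         phi_div phi Q P \<le> ereal \<delta>}"

definition upper_prob :: "(real \<Rightarrow> ereal) \<Rightarrow> 'a measure \<Rightarrow> real \<Rightarrow> 'a set \<Rightarrow> real" where
  "upper_prob phi P \<delta> A = Sup ((\<lambda>Q. measure Q A) ` phi_ball phi P \<delta>)"

definition g_fun :: "(real \<Rightarrow> ereal) \<Rightarrow> real \<Rightarrow> real \<Rightarrow> real" where
  "g_fun phi \<delta> x =
     (if x = 0 then 0 else if x = 1 then 1 else
      Sup {t \<in> {x..1}. ereal x * phi (t / x) + ereal (1 - x) * phi ((1 - t) / (1 - x))
                         \<le> ereal \<delta>})"

end

(* By Jensen's inequality on the two cells of the partition {A, A^c}, every Q in the phi-ball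
   satisfies x phi(t/x) + (1-x) phi((1-t)/(1-x)) <= delta, where x = P(A) and t = Q(A): passing to
   the coarser sigma-algebra generated by A can only decrease the divergence.  Conversely, the
   density that is constant on A and on A^c realises every such t.  So the upper probability is
   the value of the binary problem defining g.

   For a real, strictly convex, superlinear phi, the binary divergence D(x,t) is strictly
   increasing in t >= x and, by convexity of the perspective y phi(s/y), strictly decreasing in x.
   Hence g(x) is the point where D(x,.) reaches delta, and this point exists in (x,1) exactly
   while D(x,1) = x phi(1/x) + (1-x) phi(0) exceeds delta, i.e. for x < x_delta. *)

theory Submission
  imports Defs
begin

section \<open>Admissible generators\<close>

lemma admissible_phi_convex:
  assumes "admissible_phi phi" "x \<ge> 0" "y \<ge> 0" "0 \<le> t" "t \<le> 1"
  shows "phi (t * x + (1 - t) * y) \<le> ereal t * phi x + ereal (1 - t) * phi y"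
  using assms unfolding admissible_phi_def convex_ext_def by auto

lemma admissible_phi_not_MInf: "admissible_phi phi \<Longrightarrow> x \<ge> 0 \<Longrightarrow> phi x \<noteq> -\<infinity>"
  unfolding admissible_phi_def by auto

lemma admissible_phi_one: "admissible_phi phi \<Longrightarrow> phi 1 = 0"
  unfolding admissible_phi_def by auto

lemma convex_comb_eq:
  fixes u v w :: real
  assumes "u \<noteq> v"
  shows "(v - w) / (v - u) * u + (1 - (v - w) / (v - u)) * v = w"
proof -
  define l where "l = (v - w) / (v - u)"
  have "l * (v - u) = v - w" using assms unfolding l_def by simp
  then have "l * v - l * u = v - w" by (simp add: right_diff_distrib)
  moreover have "l * u + (1 - l) * v = l * u + v - l * v" by (simp add: left_diff_distrib)
  ultimately show ?thesis unfolding l_def[symmetric] by linarith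
qed

lemma ereal_convex_comb_le:
  fixes a b c :: ereal
  assumes "a \<le> c" "b \<le> c" "0 \<le> t" "t \<le> 1" "a \<noteq> -\<infinity>" "b \<noteq> -\<infinity>"
  shows "ereal t * a + ereal (1 - t) * b \<le> c"
proof (cases c)
  case (real r)
  then obtain ra rb where ra: "a = ereal ra" and rb: "b = ereal rb" using assms
    by (cases a; cases b) auto
  have "t * ra + (1 - t) * rb \<le> t * r + (1 - t) * r"
    using assms ra rb real by (intro add_mono mult_left_mono) auto
  then show ?thesis using ra rb real by (simp add: algebra_simps)
qed (use assms in auto)

lemma admissible_phi_quasiconvex:
  assumes adm: "admissible_phi phi" and "0 \<le> u" "u \<le> w" "w \<le> v" "phi u \<le> c" "phi v \<le> c"
  shows "phi w \<le> c"
proof (cases "u = v")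
  case False
  define t where "t = (v - w) / (v - u)"
  have t: "0 \<le> t" "t \<le> 1" using assms False unfolding t_def by (auto simp: field_simps)
  have "phi w \<le> ereal t * phi u + ereal (1 - t) * phi v"
    using admissible_phi_convex[OF adm, of u v t] convex_comb_eq[OF False, of w] assms t
    unfolding t_def by auto
  also have "\<dots> \<le> c"
    using ereal_convex_comb_le[OF assms(5,6) t] admissible_phi_not_MInf[OF adm] assms by auto
  finally show ?thesis .
qed (use assms in auto)

lemma admissible_phi_borel_measurable:
  assumes adm: "admissible_phi phi" and f: "f \<in> borel_measurable M" and nonneg: "\<And>w. f w \<ge> 0"
  shows "(\<lambda>w. phi (f w)) \<in> borel_measurable M"
proof -
  have "(\<lambda>s. phi (max 0 s)) \<in> borel_measurable borel"
    unfolding borel_measurable_iff_Iic_ereal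
  proof
    fix c :: ereal
    have "is_interval ((\<lambda>s. phi (max 0 s)) -` {..c} \<inter> space borel)"
      unfolding is_interval_1
    proof (intro ballI allI impI)
      fix a b x :: real
      assume "a \<in> (\<lambda>s. phi (max 0 s)) -` {..c} \<inter> space borel"
        "b \<in> (\<lambda>s. phi (max 0 s)) -` {..c} \<inter> space borel" "a \<le> x \<and> x \<le> b"
      then show "x \<in> (\<lambda>s. phi (max 0 s)) -` {..c} \<inter> space borel"
        using admissible_phi_quasiconvex[OF adm, of "max 0 a" "max 0 x" "max 0 b" c] by auto
    qed
    then show "(\<lambda>s. phi (max 0 s)) -` {..c} \<inter> space borel \<in> sets borel"
      by (rule real_interval_borel_measurable)
  qed
  from measurable_compose[OF f this] show ?thesis
    using nonneg by (simp add: max_absorb2)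
qed

lemma e2ennreal_eq_top_iff: "e2ennreal x = top \<longleftrightarrow> x = \<infinity>"
  by (cases x) (auto simp: e2ennreal_neg)

lemma ereal_pos_comb_le_real_imp_finite:
  fixes a b :: ereal
  assumes "ereal s * a + ereal u * b \<le> ereal d" "0 < s" "0 < u" "a \<noteq> -\<infinity>" "b \<noteq> -\<infinity>"
  shows "\<exists>ra rb. a = ereal ra \<and> b = ereal rb"
  using assms by (cases a; cases b) auto

definition eff_dom :: "(real \<Rightarrow> ereal) \<Rightarrow> real set" where
  "eff_dom phi = {s. 0 \<le> s \<and> phi s < \<infinity>}"

lemma admissible_phi_eff_dom_interval:
  assumes adm: "admissible_phi phi"
  shows "is_interval (eff_dom phi)"
  unfolding is_interval_1 eff_dom_def
proof (intro ballI allI impI)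
  fix u v w assume "u \<in> {s. 0 \<le> s \<and> phi s < \<infinity>}" "v \<in> {s. 0 \<le> s \<and> phi s < \<infinity>}" "u \<le> w \<and> w \<le> v"
  then have "phi w \<le> max (phi u) (phi v)" "0 \<le> w" "phi u < \<infinity>" "phi v < \<infinity>"
    using admissible_phi_quasiconvex[OF adm, of u w v "max (phi u) (phi v)"] by auto
  then show "w \<in> {s. 0 \<le> s \<and> phi s < \<infinity>}" by (auto simp: max_def split: if_splits)
qed

lemma admissible_phi_convex_on_eff_dom:
  assumes adm: "admissible_phi phi"
  shows "convex_on (eff_dom phi) (\<lambda>s. real_of_ereal (phi s))"
  unfolding eff_dom_def
proof (rule convex_onI)
  show convex: "convex {s. 0 \<le> s \<and> phi s < \<infinity>}"
    using admissible_phi_eff_dom_interval[OF adm] by (simp add: is_interval_convex_1 eff_dom_def)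
  fix t x y :: real
  assume t: "0 < t" "t < 1" and xy: "x \<in> {s. 0 \<le> s \<and> phi s < \<infinity>}" "y \<in> {s. 0 \<le> s \<and> phi s < \<infinity>}"
  have mem: "(1 - t) * x + t * y \<in> {s. 0 \<le> s \<and> phi s < \<infinity>}"
    using convex_alt[THEN iffD1, OF convex, rule_format, OF xy, of t] t by simp
  have "\<exists>r. phi s = ereal r" if "s \<in> {s. 0 \<le> s \<and> phi s < \<infinity>}" for s
    using that admissible_phi_not_MInf[OF adm, of s] by (cases "phi s") auto
  then obtain px py pz where p: "phi x = ereal px" "phi y = ereal py" "phi ((1 - t) * x + t * y) = ereal pz"
    using xy mem by blast
  have "phi ((1 - t) * x + (1 - (1 - t)) * y) \<le> ereal (1 - t) * phi x + ereal (1 - (1 - t)) * phi y"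
    using admissible_phi_convex[OF adm, of x y "1 - t"] xy t by auto
  then show "real_of_ereal (phi ((1 - t) *\<^sub>R x + t *\<^sub>R y))
      \<le> (1 - t) * real_of_ereal (phi x) + t * real_of_ereal (phi y)"
    using p by simp
qed

lemma admissible_phi_supporting_line:
  assumes adm: "admissible_phi phi" and "0 \<le> a" "a < m" "m < b" "phi a < \<infinity>" "phi b < \<infinity>"
  shows "\<exists>c r. phi m = ereal r \<and> (\<forall>s\<ge>0. ereal (r + c * (s - m)) \<le> phi s)"
proof -
  define ph where "ph s = real_of_ereal (phi s)" for s
  have fin: "phi s = ereal (ph s)" if "s \<in> eff_dom phi" for s
    using that admissible_phi_not_MInf[OF adm, of s] unfolding eff_dom_def ph_def by (cases "phi s") auto
  have "a \<in> eff_dom phi" "b \<in> eff_dom phi" using assms unfolding eff_dom_def by auto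
  then have "\<forall>w. a \<le> w \<and> w \<le> b \<longrightarrow> w \<in> eff_dom phi"
    using admissible_phi_eff_dom_interval[OF adm, unfolded is_interval_1] by blast
  then have "{a<..<b} \<subseteq> eff_dom phi" by auto
  then have m: "m \<in> interior (eff_dom phi)" using assms
    by (meson greaterThanLessThan_iff interior_maximal interior_open open_greaterThanLessThan subset_iff)
  define c where "c = Inf ((\<lambda>t. (ph m - ph t) / (m - t)) ` ({m<..} \<inter> eff_dom phi))"
  have "ereal (ph m + c * (s - m)) \<le> phi s" if "s \<ge> 0" for s
  proof (cases "s \<in> eff_dom phi")
    case True
    have "ph m + c * (s - m) \<le> ph s" unfolding c_def ph_def
      using convex_le_Inf_differential[OF admissible_phi_convex_on_eff_dom[OF adm] m True] by simp
    then show ?thesis using fin[OF True] by simp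
  next
    case False
    then show ?thesis using that unfolding eff_dom_def by (simp add: top.not_eq_extremum)
  qed
  moreover have "phi m = ereal (ph m)" using fin m interior_subset by blast
  ultimately show ?thesis by blast
qed

lemma AE_eq_mean_if_le:
  fixes f :: "'a \<Rightarrow> real"
  assumes "finite_measure P" "integrable P f" "B \<in> sets P"
    and mean: "(\<integral>w. indicator B w * f w \<partial>P) = (\<integral>w. indicator B w * m \<partial>P)"
    and le: "AE w in P. w \<in> B \<longrightarrow> f w \<le> m"
  shows "AE w in P. w \<in> B \<longrightarrow> f w = m"
proof -
  interpret finite_measure P by fact
  have im: "integrable P (\<lambda>w. indicator B w * m)"
    using integrable_real_mult_indicator[OF \<open>B \<in> sets P\<close> integrable_const[of m]]
    by (simp add: mult.commute)
  have iff: "integrable P (\<lambda>w. indicator B w * f w)"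
    using integrable_real_mult_indicator[OF \<open>B \<in> sets P\<close> \<open>integrable P f\<close>]
    by (simp add: mult.commute)
  have int: "integrable P (\<lambda>w. indicator B w * m - indicator B w * f w)" using im iff by simp
  have "(\<integral>w. indicator B w * m - indicator B w * f w \<partial>P) = 0"
    unfolding Bochner_Integration.integral_diff[OF im iff] mean by simp
  moreover have "AE w in P. 0 \<le> indicator B w * m - indicator B w * f w"
    using le by eventually_elim (auto simp: indicator_def)
  ultimately have "AE w in P. indicator B w * m - indicator B w * f w = 0"
    using integral_nonneg_eq_0_iff_AE[OF int] by auto
  then show ?thesis by eventually_elim (auto simp: indicator_def)
qed

text \<open>Where \<open>\<phi> (f w) < \<infinity>\<close>, \<open>f w\<close> lies on one side of \<open>m\<close>; having mean \<open>m\<close> on \<open>B\<close>, it equals \<open>m\<close>.\<close>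

lemma AE_eq_mean_if_one_sided:
  fixes f :: "'a \<Rightarrow> real"
  assumes "finite_measure P" "integrable P f" "B \<in> sets P" "\<And>w. f w \<ge> 0"
    and mean: "(\<integral>w. indicator B w * f w \<partial>P) = (\<integral>w. indicator B w * m \<partial>P)"
    and fin: "AE w in P. phi (f w) < \<infinity>"
    and one_sided: "\<not> (\<exists>a b. 0 \<le> a \<and> a < m \<and> m < b \<and> phi a < \<infinity> \<and> phi b < \<infinity>)"
  shows "AE w in P. w \<in> B \<longrightarrow> f w = m"
proof (cases "\<forall>s\<ge>0. phi s < \<infinity> \<longrightarrow> s \<le> m")
  case True
  with fin assms(4) have "AE w in P. w \<in> B \<longrightarrow> f w \<le> m" by auto
  then show ?thesis using AE_eq_mean_if_le[OF assms(1-3) mean] by simp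
next
  case False
  then obtain b where "0 \<le> b" "phi b < \<infinity>" "m < b" by auto
  with one_sided have "\<forall>s\<ge>0. phi s < \<infinity> \<longrightarrow> m \<le> s" by (metis not_le)
  then have "AE w in P. w \<in> B \<longrightarrow> - f w \<le> - m" using fin assms(4) by auto
  then show ?thesis using AE_eq_mean_if_le[of P "\<lambda>w. - f w" B "- m"] assms(1-3) mean by simp
qed

section \<open>The upper probability as a binary problem\<close>

lemma affine_minorant_at_conditional_mean:
  assumes adm: "admissible_phi phi" and P: "prob_space P" and B: "B \<in> sets P"
    and pos: "measure P B > 0"
    and f: "f \<in> borel_measurable P" "\<And>w. f w \<ge> 0" "integrable P f"
    and fin: "(\<integral>\<^sup>+w. e2ennreal (phi (f w)) \<partial>P) \<noteq> \<infinity>"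
  defines "m \<equiv> (\<integral>w. indicator B w * f w \<partial>P) / measure P B"
  shows "\<exists>c r. phi m = ereal r \<and> (AE w in P. w \<in> B \<longrightarrow> ereal (r + c * (f w - m)) \<le> phi (f w))"
proof -
  interpret prob_space P by fact
  have [measurable]: "(\<lambda>w. phi (f w)) \<in> borel_measurable P"
    using admissible_phi_borel_measurable[OF adm f(1,2)] .
  have "AE w in P. e2ennreal (phi (f w)) \<noteq> \<infinity>"
    by (rule nn_integral_PInf_AE[OF _ fin]) measurable
  then have AE_fin: "AE w in P. phi (f w) < \<infinity>"
    by eventually_elim (auto simp: e2ennreal_eq_top_iff top.not_eq_extremum)
  have mean: "(\<integral>w. indicator B w * f w \<partial>P) = (\<integral>w. indicator B w * m \<partial>P)"
    using pos B sets.sets_into_space[OF B] unfolding m_def by (simp add: Int_absorb2)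
  have "0 \<le> m" unfolding m_def using f(2) by (intro divide_nonneg_nonneg integral_nonneg_AE) auto
  show ?thesis
  proof (cases "\<exists>a b. 0 \<le> a \<and> a < m \<and> m < b \<and> phi a < \<infinity> \<and> phi b < \<infinity>")
    case True
    then obtain a b where "0 \<le> a" "a < m" "m < b" "phi a < \<infinity>" "phi b < \<infinity>" by blast
    from admissible_phi_supporting_line[OF adm this] obtain c r
      where "phi m = ereal r" "\<forall>s\<ge>0. ereal (r + c * (s - m)) \<le> phi s" by blast
    then show ?thesis using f(2) by (intro exI[of _ c] exI[of _ r]) auto
  next
    case False
    have eq: "AE w in P. w \<in> B \<longrightarrow> f w = m"
      by (rule AE_eq_mean_if_one_sided[OF finite_measure_axioms f(3) B f(2) mean AE_fin False])
    have "(\<integral>\<^sup>+w. e2ennreal (phi m) * indicator B w \<partial>P) \<le> (\<integral>\<^sup>+w. e2ennreal (phi (f w)) \<partial>P)"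
    proof (rule nn_integral_mono_AE)
      show "AE w in P. e2ennreal (phi m) * indicator B w \<le> e2ennreal (phi (f w))"
        using eq by eventually_elim (auto simp: indicator_def)
    qed
    then have "e2ennreal (phi m) * emeasure P B \<noteq> \<infinity>"
      using fin nn_integral_cmult_indicator[OF B] by (auto simp: top_unique)
    moreover have "emeasure P B \<noteq> 0" using pos B by (simp add: emeasure_eq_measure)
    ultimately have "phi m \<noteq> \<infinity>" by (auto simp: ennreal_mult_eq_top_iff e2ennreal_eq_top_iff)
    then obtain r where "phi m = ereal r"
      using admissible_phi_not_MInf[OF adm \<open>0 \<le> m\<close>] by (cases "phi m") auto
    moreover from eq have "AE w in P. w \<in> B \<longrightarrow> ereal (r + 0 * (f w - m)) \<le> phi (f w)"
      by eventually_elim (use \<open>phi m = ereal r\<close> in auto)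
    ultimately show ?thesis by blast
  qed
qed

lemma integral_indicator_affine:
  fixes f :: "'a \<Rightarrow> real"
  assumes "finite_measure P" "A \<in> sets P" "integrable P f"
    and mean: "(\<integral>w. indicator A w * f w \<partial>P) = m * measure P A"
  shows "integrable P (\<lambda>w. indicator A w * (r + c * (f w - m)))"
    and "(\<integral>w. indicator A w * (r + c * (f w - m)) \<partial>P) = r * measure P A"
proof -
  interpret finite_measure P by fact
  have eq: "(\<lambda>w. indicator A w * (r + c * (f w - m)))
      = (\<lambda>w. (r - c * m) * indicator A w + c * (indicator A w * f w))"
    by (simp add: fun_eq_iff algebra_simps)
  have i1: "integrable P (\<lambda>w. (r - c * m) * indicator A w)"
    using integrable_real_mult_indicator[OF \<open>A \<in> sets P\<close> integrable_const[of "r - c * m"]] .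
  have i2: "integrable P (\<lambda>w. c * (indicator A w * f w))"
    using integrable_real_mult_indicator[OF \<open>A \<in> sets P\<close> \<open>integrable P f\<close>]
    by (intro integrable_mult_right) (simp add: mult.commute)
  show "integrable P (\<lambda>w. indicator A w * (r + c * (f w - m)))" unfolding eq using i1 i2 by simp
  show "(\<integral>w. indicator A w * (r + c * (f w - m)) \<partial>P) = r * measure P A"
    unfolding eq Bochner_Integration.integral_add[OF i1 i2] integral_mult_right_zero mean
    using \<open>A \<in> sets P\<close> sets.sets_into_space[OF \<open>A \<in> sets P\<close>] by (simp add: Int_absorb2 algebra_simps)
qed

definition ereal_expectation :: "'a measure \<Rightarrow> ('a \<Rightarrow> ereal) \<Rightarrow> ereal" where
  "ereal_expectation M g =
     enn2ereal (\<integral>\<^sup>+w. e2ennreal (g w) \<partial>M) - enn2ereal (\<integral>\<^sup>+w. e2ennreal (- g w) \<partial>M)"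

lemma phi_div_eq_ereal_expectation:
  "phi_div phi Q P = ereal_expectation P (\<lambda>w. phi (enn2real (RN_deriv P Q w)))"
  unfolding phi_div_def ereal_expectation_def ..

lemma positive_negative_parts_le:
  assumes "ereal l \<le> u"
  shows "ennreal l + e2ennreal (- u) \<le> e2ennreal u + ennreal (- l)"
proof (cases u)
  case (real r)
  then have "l \<le> r" using assms by simp
  have "ennreal l + ennreal (- r) \<le> ennreal r + ennreal (- l)"
  proof (cases "l \<ge> 0")
    case True
    then show ?thesis using \<open>l \<le> r\<close> by (simp add: ennreal_neg ennreal_leI)
  next
    case False
    show ?thesis
    proof (cases "r \<ge> 0")
      case True
      then show ?thesis using False by (simp add: ennreal_neg add_increasing2)
    next
      case False
      then show ?thesis using \<open>\<not> l \<ge> 0\<close> \<open>l \<le> r\<close> by (simp add: ennreal_neg ennreal_leI)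
    qed
  qed
  then show ?thesis using real by simp
next
  case PInf
  then show ?thesis by simp
next
  case MInf
  then show ?thesis using assms by simp
qed

lemma ereal_expectation_ge_integral:
  assumes g[measurable]: "g \<in> borel_measurable M" and l: "integrable M l"
    and le: "AE w in M. ereal (l w) \<le> g w"
  shows "ereal (\<integral>w. l w \<partial>M) \<le> ereal_expectation M g"
proof -
  have [measurable]: "l \<in> borel_measurable M" using l by auto
  define U where "U = (\<integral>\<^sup>+w. e2ennreal (g w) \<partial>M)"
  define V where "V = (\<integral>\<^sup>+w. e2ennreal (- g w) \<partial>M)"
  define Lp where "Lp = (\<integral>\<^sup>+w. ennreal (l w) \<partial>M)"
  define Ln where "Ln = (\<integral>\<^sup>+w. ennreal (- l w) \<partial>M)"
  have Lp: "Lp \<noteq> top" and Ln: "Ln \<noteq> top" using l unfolding Lp_def Ln_def by auto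
  have "V \<le> Ln" unfolding V_def Ln_def
  proof (rule nn_integral_mono_AE)
    show "AE w in M. e2ennreal (- g w) \<le> ennreal (- l w)"
      using le by eventually_elim
        (metis e2ennreal_ereal e2ennreal_mono ereal_minus_le_minus uminus_ereal.simps(1))
  qed
  then obtain v where v: "v \<ge> 0" "V = ennreal v" using Ln by (cases V) (auto simp: top_unique)
  have "(\<integral>\<^sup>+w. ennreal (l w) + e2ennreal (- g w) \<partial>M) \<le> (\<integral>\<^sup>+w. e2ennreal (g w) + ennreal (- l w) \<partial>M)"
  proof (rule nn_integral_mono_AE)
    show "AE w in M. ennreal (l w) + e2ennreal (- g w) \<le> e2ennreal (g w) + ennreal (- l w)"
      using le by eventually_elim (rule positive_negative_parts_le)
  qed
  then have key: "Lp + V \<le> U + Ln" unfolding Lp_def V_def U_def Ln_def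
    by (subst (asm) (1 2) nn_integral_add) auto
  have il: "(\<integral>w. l w \<partial>M) = enn2real Lp - enn2real Ln"
    unfolding Lp_def Ln_def by (rule real_lebesgue_integral_def[OF l])
  show ?thesis
  proof (cases "U = top")
    case True
    then show ?thesis unfolding ereal_expectation_def U_def[symmetric] V_def[symmetric] using v by simp
  next
    case False
    obtain u where u: "u \<ge> 0" "U = ennreal u" using False by (cases U) auto
    obtain a where a: "a \<ge> 0" "Lp = ennreal a" using Lp by (cases Lp) auto
    obtain b where b: "b \<ge> 0" "Ln = ennreal b" using Ln by (cases Ln) auto
    have "a + v \<le> u + b" using key u v a b by (simp del: ennreal_plus add: ennreal_plus[symmetric])
    then show ?thesis
      unfolding ereal_expectation_def U_def[symmetric] V_def[symmetric] il using u v a b by simp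
  qed
qed

lemma nn_integral_two_valued:
  assumes P: "prob_space P" and A: "A \<in> sets P" and x: "measure P A = x"
    and g: "AE w in P. g w = ennreal (if w \<in> A then a else b)"
  shows "enn2ereal (\<integral>\<^sup>+w. g w \<partial>P) = ereal (max 0 a * x + max 0 b * (1 - x))"
proof -
  interpret P: prob_space P by fact
  define Ac where "Ac = space P - A"
  have Ac: "Ac \<in> sets P" "measure P Ac = 1 - x"
    unfolding Ac_def using A P.prob_compl[OF A] x by auto
  have x01: "0 \<le> x" "x \<le> 1" using x by auto
  have "(\<integral>\<^sup>+w. g w \<partial>P)
      = (\<integral>\<^sup>+w. ennreal (max 0 a) * indicator A w + ennreal (max 0 b) * indicator Ac w \<partial>P)"
  proof (rule nn_integral_cong_AE)
    show "AE w in P. g w = ennreal (max 0 a) * indicator A w + ennreal (max 0 b) * indicator Ac w"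
      using g AE_space by eventually_elim (auto simp: Ac_def indicator_def ennreal_max_0)
  qed
  also have "\<dots> = ennreal (max 0 a) * emeasure P A + ennreal (max 0 b) * emeasure P Ac"
    using A Ac by (simp add: nn_integral_add nn_integral_cmult_indicator)
  also have "\<dots> = ennreal (max 0 a * x + max 0 b * (1 - x))"
  proof -
    have "ennreal (max 0 a * x + max 0 b * (1 - x)) = ennreal (max 0 a * x) + ennreal (max 0 b * (1 - x))"
      using x01 by (intro ennreal_plus) auto
    also have "\<dots> = ennreal (max 0 a) * ennreal x + ennreal (max 0 b) * ennreal (1 - x)"
      using x01 by (simp add: ennreal_mult)
    finally show ?thesis using x Ac by (simp add: P.emeasure_eq_measure)
  qed
  finally have "(\<integral>\<^sup>+w. g w \<partial>P) = ennreal (max 0 a * x + max 0 b * (1 - x))" .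
  moreover have "0 \<le> max 0 a * x + max 0 b * (1 - x)" using x01 by auto
  ultimately show ?thesis by (simp only: enn2ereal_ennreal)
qed

lemma ereal_expectation_two_valued:
  assumes "prob_space P" "A \<in> sets P" "measure P A = x"
    and g: "AE w in P. g w = ereal (if w \<in> A then a else b)"
  shows "ereal_expectation P g = ereal (x * a + (1 - x) * b)"
proof -
  have "AE w in P. e2ennreal (g w) = ennreal (if w \<in> A then a else b)"
    using g by eventually_elim simp
  then have "enn2ereal (\<integral>\<^sup>+w. e2ennreal (g w) \<partial>P) = ereal (max 0 a * x + max 0 b * (1 - x))"
    by (rule nn_integral_two_valued[OF assms(1-3)])
  moreover have "AE w in P. e2ennreal (- g w) = ennreal (if w \<in> A then - a else - b)"
    using g by eventually_elim simp
  then have "enn2ereal (\<integral>\<^sup>+w. e2ennreal (- g w) \<partial>P)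
      = ereal (max 0 (- a) * x + max 0 (- b) * (1 - x))"
    by (rule nn_integral_two_valued[OF assms(1-3)])
  moreover have "max 0 a * x + max 0 b * (1 - x) - (max 0 (- a) * x + max 0 (- b) * (1 - x))
      = x * a + (1 - x) * b"
  proof -
    have parts: "max 0 r - max 0 (- r) = r" for r :: real by auto
    have "max 0 a * x + max 0 b * (1 - x) - (max 0 (- a) * x + max 0 (- b) * (1 - x))
        = (max 0 a - max 0 (- a)) * x + (max 0 b - max 0 (- b)) * (1 - x)"
      by (simp add: algebra_simps)
    then show ?thesis unfolding parts by simp
  qed
  ultimately show ?thesis unfolding ereal_expectation_def by simp
qed

lemma real_density_RN_deriv:
  assumes P: "prob_space P" and Q: "prob_space Q" and sq: "sets Q = sets P"
    and ac: "absolutely_continuous P Q"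
  shows "(\<lambda>w. enn2real (RN_deriv P Q w)) \<in> borel_measurable P"
    and "integrable P (\<lambda>w. enn2real (RN_deriv P Q w))"
    and "\<And>B. B \<in> sets P \<Longrightarrow> (\<integral>w. indicator B w * enn2real (RN_deriv P Q w) \<partial>P) = measure Q B"
proof -
  interpret P: prob_space P by fact
  interpret Q: prob_space Q by fact
  let ?f = "\<lambda>w. enn2real (RN_deriv P Q w)"
  have dens: "density P (RN_deriv P Q) = Q" by (rule P.density_RN_deriv[OF ac sq])
  have fin: "AE w in P. RN_deriv P Q w \<noteq> \<infinity>"
    by (rule P.RN_deriv_finite[OF Q.sigma_finite_measure_axioms ac sq])
  show fm: "?f \<in> borel_measurable P" by measurable
  have em: "emeasure Q B = (\<integral>\<^sup>+w. ennreal (indicator B w * ?f w) \<partial>P)" if B: "B \<in> sets P" for B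
  proof -
    have "emeasure Q B = emeasure (density P (RN_deriv P Q)) B" by (simp only: dens)
    also have "\<dots> = (\<integral>\<^sup>+w. RN_deriv P Q w * indicator B w \<partial>P)"
      by (rule emeasure_density[OF borel_measurable_RN_deriv B])
    also have "\<dots> = (\<integral>\<^sup>+w. ennreal (indicator B w * ?f w) \<partial>P)"
    proof (rule nn_integral_cong_AE)
      show "AE w in P. RN_deriv P Q w * indicator B w = ennreal (indicator B w * ?f w)"
        using fin by eventually_elim (auto simp: indicator_def less_top)
    qed
    finally show ?thesis .
  qed
  have "(\<integral>\<^sup>+w. ennreal (?f w) \<partial>P) = emeasure Q (space P)"
    unfolding em[OF sets.top] by (rule nn_integral_cong) (simp add: indicator_def)
  also have "\<dots> = 1" using sq Q.emeasure_space_1 by (metis sets_eq_imp_space_eq)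
  finally show "integrable P ?f"
    by (intro integrableI_nonneg fm AE_I2 enn2real_nonneg) simp
  fix B assume B: "B \<in> sets P"
  have "(\<integral>w. indicator B w * ?f w \<partial>P) = enn2real (\<integral>\<^sup>+w. ennreal (indicator B w * ?f w) \<partial>P)"
    using B fm by (intro integral_eq_nn_integral AE_I2 borel_measurable_times borel_measurable_indicator)
       (auto simp: indicator_def)
  also have "\<dots> = measure Q B" using em[OF B] by (simp add: measure_def)
  finally show "(\<integral>w. indicator B w * ?f w \<partial>P) = measure Q B" .
qed

lemma center_in_phi_ball:
  assumes adm: "admissible_phi phi" and P: "prob_space P" and "\<delta> > 0"
  shows "P \<in> phi_ball phi P \<delta>"
proof -
  interpret P: prob_space P by fact
  have "AE w in P. 1 = RN_deriv P P w"
    using P.RN_deriv_unique[of "\<lambda>_. 1" P] density_1[of P] by simp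
  then have "AE w in P. phi (enn2real (RN_deriv P P w)) = ereal (if w \<in> space P then 0 else 0)"
    by eventually_elim (simp add: admissible_phi_one[OF adm])
  then have "phi_div phi P P = ereal (1 * 0 + (1 - 1) * 0)"
    unfolding phi_div_eq_ereal_expectation
    by (rule ereal_expectation_two_valued[OF P sets.top P.prob_space])
  then show ?thesis unfolding phi_ball_def using P \<open>\<delta> > 0\<close>
    by (auto simp: absolutely_continuous_def)
qed

lemma measure_phi_ball_null:
  assumes "Q \<in> phi_ball phi P \<delta>" "A \<in> null_sets P"
  shows "measure Q A = 0"
  using assms unfolding phi_ball_def absolutely_continuous_def
  by (auto simp: measure_def null_sets_def)

lemma measure_phi_ball_full:
  assumes P: "prob_space P" and Q: "Q \<in> phi_ball phi P \<delta>" and A: "A \<in> sets P"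
    and full: "measure P A = 1"
  shows "measure Q A = 1"
proof -
  interpret P: prob_space P by fact
  from Q have sq: "sets Q = sets P" and "prob_space Q" unfolding phi_ball_def by auto
  then interpret Q: prob_space Q by simp
  have "space P - A \<in> null_sets P"
    using A P.prob_compl[OF A] full by (simp add: null_sets_def P.emeasure_eq_measure)
  then have "measure Q (space P - A) = 0" by (rule measure_phi_ball_null[OF Q])
  moreover have "space Q = space P" using sq by (rule sets_eq_imp_space_eq)
  ultimately show ?thesis using Q.prob_compl[of A] A sq by simp
qed

lemma ereal_expectation_ge_two_cell:
  assumes adm: "admissible_phi phi" and P: "prob_space P" and A: "A \<in> sets P"
    and x: "measure P A = x" "0 < x" "x < 1"
    and f: "f \<in> borel_measurable P" "\<And>w. f w \<ge> 0" "integrable P f"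
    and fin: "(\<integral>\<^sup>+w. e2ennreal (phi (f w)) \<partial>P) \<noteq> \<infinity>"
    and mass_A: "(\<integral>w. indicator A w * f w \<partial>P) = t"
    and mass_Ac: "(\<integral>w. indicator (space P - A) w * f w \<partial>P) = 1 - t"
  shows "ereal x * phi (t / x) + ereal (1 - x) * phi ((1 - t) / (1 - x))
    \<le> ereal_expectation P (\<lambda>w. phi (f w))"
proof -
  interpret P: prob_space P by fact
  define Ac where "Ac = space P - A"
  have Ac: "Ac \<in> sets P" "measure P Ac = 1 - x"
    unfolding Ac_def using A P.prob_compl[OF A] x by auto
  have mean_A: "(\<integral>w. indicator A w * f w \<partial>P) = t / x * measure P A"
    using mass_A x by simp
  have mean_Ac: "(\<integral>w. indicator Ac w * f w \<partial>P) = (1 - t) / (1 - x) * measure P Ac"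
    using mass_Ac Ac x unfolding Ac_def by simp
  obtain c1 r1 where r1: "phi (t / x) = ereal r1"
    and J1: "AE w in P. w \<in> A \<longrightarrow> ereal (r1 + c1 * (f w - t / x)) \<le> phi (f w)"
    using affine_minorant_at_conditional_mean[OF adm P A _ f fin] mean_A x by auto
  obtain c2 r2 where r2: "phi ((1 - t) / (1 - x)) = ereal r2"
    and J2: "AE w in P. w \<in> Ac \<longrightarrow> ereal (r2 + c2 * (f w - (1 - t) / (1 - x))) \<le> phi (f w)"
    using affine_minorant_at_conditional_mean[OF adm P Ac(1) _ f fin] mean_Ac Ac x by auto
  define l where "l w = indicator A w * (r1 + c1 * (f w - t / x))
    + indicator Ac w * (r2 + c2 * (f w - (1 - t) / (1 - x)))" for w
  have "integrable P l" "(\<integral>w. l w \<partial>P) = r1 * x + r2 * (1 - x)"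
    using integral_indicator_affine[OF P.finite_measure_axioms A f(3) mean_A, of r1 c1]
      integral_indicator_affine[OF P.finite_measure_axioms Ac(1) f(3) mean_Ac, of r2 c2] x Ac
    unfolding l_def by auto
  moreover have "AE w in P. ereal (l w) \<le> phi (f w)"
    using J1 J2 AE_space by eventually_elim (auto simp: l_def Ac_def indicator_def)
  ultimately have "ereal (r1 * x + r2 * (1 - x)) \<le> ereal_expectation P (\<lambda>w. phi (f w))"
    using ereal_expectation_ge_integral admissible_phi_borel_measurable[OF adm f(1,2)] by metis
  then show ?thesis using r1 r2 by (simp add: algebra_simps)
qed

lemma phi_ball_two_point_bound:
  assumes adm: "admissible_phi phi" and P: "prob_space P" and A: "A \<in> sets P"
    and x: "measure P A = x" "0 < x" "x < 1" and Q: "Q \<in> phi_ball phi P \<delta>"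
  defines "t \<equiv> measure Q A"
  shows "ereal x * phi (t / x) + ereal (1 - x) * phi ((1 - t) / (1 - x)) \<le> ereal \<delta>"
proof -
  interpret P: prob_space P by fact
  from Q have sq: "sets Q = sets P" and qs: "prob_space Q" and ac: "absolutely_continuous P Q"
    and D: "phi_div phi Q P \<le> ereal \<delta>" unfolding phi_ball_def by auto
  interpret Q: prob_space Q by fact
  define f where "f = (\<lambda>w. enn2real (RN_deriv P Q w))"
  have f: "f \<in> borel_measurable P" "\<And>w. f w \<ge> 0" "integrable P f"
    and f_int: "\<And>B. B \<in> sets P \<Longrightarrow> (\<integral>w. indicator B w * f w \<partial>P) = measure Q B"
    using real_density_RN_deriv[OF P qs sq ac] unfolding f_def by auto
  have fin: "(\<integral>\<^sup>+w. e2ennreal (phi (f w)) \<partial>P) \<noteq> \<infinity>"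
  proof
    assume "(\<integral>\<^sup>+w. e2ennreal (phi (f w)) \<partial>P) = \<infinity>"
    then have "phi_div phi Q P = \<infinity>" by (simp add: phi_div_def f_def)
    then show False using D by simp
  qed
  have "measure Q (space P - A) = 1 - t"
    unfolding t_def using Q.prob_compl[of A] A sq by (simp add: sets_eq_imp_space_eq[OF sq])
  then have "ereal x * phi (t / x) + ereal (1 - x) * phi ((1 - t) / (1 - x))
      \<le> ereal_expectation P (\<lambda>w. phi (f w))"
    using ereal_expectation_ge_two_cell[OF adm P A x f fin] f_int A unfolding t_def by auto
  also have "\<dots> = phi_div phi Q P" unfolding phi_div_eq_ereal_expectation f_def ..
  finally show ?thesis using D by (rule order_trans)
qed

lemma two_point_density_in_phi_ball:
  assumes adm: "admissible_phi phi" and P: "prob_space P" and A: "A \<in> sets P"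
    and x: "measure P A = x" "0 < x" "x < 1" and t: "0 \<le> t" "t \<le> 1"
    and le: "ereal x * phi (t / x) + ereal (1 - x) * phi ((1 - t) / (1 - x)) \<le> ereal \<delta>"
  shows "\<exists>Q\<in>phi_ball phi P \<delta>. measure Q A = t"
proof -
  interpret P: prob_space P by fact
  define m1 where "m1 = t / x"
  define m2 where "m2 = (1 - t) / (1 - x)"
  have m: "m1 \<ge> 0" "m2 \<ge> 0" "m1 * x = t" "m2 * (1 - x) = 1 - t"
    unfolding m1_def m2_def using x t by auto
  obtain r1 r2 where r: "phi m1 = ereal r1" "phi m2 = ereal r2"
    using ereal_pos_comb_le_real_imp_finite[OF le[folded m1_def m2_def]] x
      admissible_phi_not_MInf[OF adm] m by auto
  define h where "h = (\<lambda>w. ennreal (if w \<in> A then m1 else m2))"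
  have h[measurable]: "h \<in> borel_measurable P" unfolding h_def using A by measurable
  define Q where "Q = density P h"
  have emA: "emeasure Q A = ennreal t"
  proof -
    have "emeasure Q A = (\<integral>\<^sup>+w. h w * indicator A w \<partial>P)"
      unfolding Q_def by (rule emeasure_density[OF h A])
    also have "\<dots> = (\<integral>\<^sup>+w. ennreal m1 * indicator A w \<partial>P)"
      unfolding h_def by (intro nn_integral_cong) (simp add: indicator_def)
    also have "\<dots> = ennreal m1 * emeasure P A" using A by (rule nn_integral_cmult_indicator)
    also have "\<dots> = ennreal t"
      using x m by (simp add: P.emeasure_eq_measure ennreal_mult''[symmetric])
    finally show ?thesis .
  qed
  have "emeasure Q (space Q) = (\<integral>\<^sup>+w. h w * indicator (space P) w \<partial>P)"
    unfolding Q_def space_density by (rule emeasure_density[OF h sets.top])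
  also have "\<dots> = (\<integral>\<^sup>+w. h w \<partial>P)" by (intro nn_integral_cong) (simp add: indicator_def)
  finally have "enn2ereal (emeasure Q (space Q)) = ereal (max 0 m1 * x + max 0 m2 * (1 - x))"
    using nn_integral_two_valued[OF P A x(1), of h m1 m2] unfolding h_def by simp
  also have "\<dots> = 1" using m by simp
  finally have "emeasure Q (space Q) = 1" by (metis e2ennreal_enn2ereal e2ennreal_ereal ennreal_1 one_ereal_def)
  then have qs: "prob_space Q" by (rule prob_spaceI)
  have rn: "AE w in P. h w = RN_deriv P Q w"
    unfolding Q_def by (rule P.RN_deriv_unique[OF h refl])
  have "AE w in P. phi (enn2real (RN_deriv P Q w)) = ereal (if w \<in> A then r1 else r2)"
    using rn
  proof eventually_elim
    case (elim w)
    then have "RN_deriv P Q w = h w" by simp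
    then show ?case using m r by (cases "w \<in> A") (simp_all add: h_def)
  qed
  then have "phi_div phi Q P = ereal (x * r1 + (1 - x) * r2)"
    unfolding phi_div_eq_ereal_expectation by (rule ereal_expectation_two_valued[OF P A x(1)])
  also have "\<dots> \<le> ereal \<delta>" using le r unfolding m1_def m2_def by simp
  finally have "Q \<in> phi_ball phi P \<delta>"
    unfolding phi_ball_def using qs absolutely_continuousI_density[OF h] by (auto simp: Q_def)
  moreover have "measure Q A = t" using emA t by (simp add: measure_def)
  ultimately show ?thesis by blast
qed

lemma cSup_inter_atLeast:
  fixes M :: "real set"
  assumes "x \<in> M" "bdd_above M"
  shows "Sup (M \<inter> {x..}) = Sup M"
proof (rule antisym)
  show "Sup (M \<inter> {x..}) \<le> Sup M" using assms by (intro cSup_subset_mono) auto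
  have bdd: "bdd_above (M \<inter> {x..})" using assms(2) by (rule bdd_above_Int1)
  have x: "x \<le> Sup (M \<inter> {x..})" using assms(1) by (intro cSup_upper[OF _ bdd]) auto
  show "Sup M \<le> Sup (M \<inter> {x..})"
  proof (rule cSup_least)
    show "M \<noteq> {}" using assms(1) by auto
    show "m \<le> Sup (M \<inter> {x..})" if "m \<in> M" for m
      using that x cSup_upper[OF _ bdd, of m] by (cases "x \<le> m") auto
  qed
qed

lemma upper_prob_eq_g_fun:
  assumes P: "prob_space P" and "\<delta> > 0" and adm: "admissible_phi phi" and A: "A \<in> sets P"
  shows "upper_prob phi P \<delta> A = g_fun phi \<delta> (measure P A)"
proof -
  interpret P: prob_space P by fact
  define x where "x = measure P A"
  define M where "M = (\<lambda>Q. measure Q A) ` phi_ball phi P \<delta>"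
  have up: "upper_prob phi P \<delta> A = Sup M" unfolding upper_prob_def M_def ..
  have xM: "x \<in> M" unfolding M_def x_def using center_in_phi_ball[OF adm P \<open>\<delta> > 0\<close>] by blast
  have M_le_1: "m \<le> 1" if "m \<in> M" for m
    using that unfolding M_def phi_ball_def by (auto intro: prob_space.prob_le_1)
  have "0 \<le> x" "x \<le> 1" unfolding x_def by auto
  then consider "x = 0" | "x = 1" | "0 < x" "x < 1" by (cases "x = 0"; cases "x = 1") auto
  then show ?thesis
  proof cases
    case 1
    then have "A \<in> null_sets P" using A unfolding x_def by (simp add: null_sets_def P.emeasure_eq_measure)
    then have "M \<subseteq> {0}" unfolding M_def using measure_phi_ball_null by blast
    then have "M = {0}" using xM 1 by auto
    then show ?thesis using up 1 by (simp add: g_fun_def x_def)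
  next
    case 2
    then have "M \<subseteq> {1}" unfolding M_def x_def using measure_phi_ball_full[OF P _ A] by blast
    then have "M = {1}" using xM 2 by auto
    then show ?thesis using up 2 by (simp add: g_fun_def x_def)
  next
    case 3
    define S where "S = {t \<in> {x..1}.
      ereal x * phi (t / x) + ereal (1 - x) * phi ((1 - t) / (1 - x)) \<le> ereal \<delta>}"
    have "M \<inter> {x..} = S"
    proof (intro equalityI subsetI)
      fix t assume "t \<in> M \<inter> {x..}"
      then obtain Q where "Q \<in> phi_ball phi P \<delta>" "t = measure Q A" "x \<le> t" "t \<le> 1"
        using M_le_1 unfolding M_def by blast
      then show "t \<in> S"
        using phi_ball_two_point_bound[OF adm P A x_def[symmetric] 3] unfolding S_def by auto
    next
      fix t assume "t \<in> S"
      then obtain Q where "Q \<in> phi_ball phi P \<delta>" "measure Q A = t" "x \<le> t"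
        using two_point_density_in_phi_ball[OF adm P A x_def[symmetric] 3, of t \<delta>] 3
        unfolding S_def by auto
      then show "t \<in> M \<inter> {x..}" unfolding M_def by (auto intro: rev_image_eqI[of Q])
    qed
    moreover have "bdd_above M" using M_le_1 by (auto intro: bdd_aboveI[of _ 1])
    ultimately have "upper_prob phi P \<delta> A = Sup S" using up cSup_inter_atLeast[OF xM] by simp
    then show ?thesis using 3 by (simp add: g_fun_def S_def x_def)
  qed
qed

section \<open>Shape of \<open>g\<close> for regular generators\<close>

lemma continuous_on_mono_onto_Icc:
  fixes f :: "real \<Rightarrow> real"
  assumes mono: "mono_on {a..b} f" and onto: "f ` {a..b} = {f a..f b}"
  shows "continuous_on {a..b} f"
proof (cases "a \<le> b")
  case True
  define c where "c v = max a (min b v)" for v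
  have c: "c v \<in> {a..b}" for v using True by (auto simp: c_def)
  define h where "h v = f (c v) + (v - c v)" for v
  have "mono h"
  proof (rule monoI)
    fix u v :: real assume "u \<le> v"
    then have "c u \<le> c v" "u - c u \<le> v - c v" by (auto simp: c_def max_def min_def)
    then show "h u \<le> h v" unfolding h_def by (intro add_mono mono_onD[OF mono c c])
  qed
  have "z \<in> range h" for z
  proof -
    consider "z < f a" | "z \<in> {f a..f b}" | "f b < z" by force
    then show ?thesis
    proof cases
      case 1
      then have "h (a + (z - f a)) = z" using True by (simp add: h_def c_def)
      then show ?thesis by (metis rangeI)
    next
      case 2
      then obtain v where "v \<in> {a..b}" "f v = z" using onto by (metis imageE)
      then have "h v = z" by (simp add: h_def c_def)
      then show ?thesis by (metis rangeI)
    next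
      case 3
      then have "h (b + (z - f b)) = z" using True by (simp add: h_def c_def)
      then show ?thesis by (metis rangeI)
    qed
  qed
  then have "range h = UNIV" by blast
  then have "continuous_on UNIV h"
    by (intro continuous_onI_mono) (auto intro: monoD[OF \<open>mono h\<close>])
  then have "continuous_on {a..b} h" by (rule continuous_on_subset) auto
  then show ?thesis by (rule continuous_on_eq) (simp add: h_def c_def)
qed simp

locale regular_phi =
  fixes phi :: "real \<Rightarrow> ereal"
  assumes admissible: "admissible_phi phi"
    and finite: "\<And>x. x \<ge> 0 \<Longrightarrow> phi x \<noteq> \<infinity>"
    and strictly_convex: "strictly_convex_ext phi"
    and superlinear: "((\<lambda>x. phi x / ereal x) \<longlongrightarrow> \<infinity>) at_top"
begin

definition phr :: "real \<Rightarrow> real" where "phr s = real_of_ereal (phi s)"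

lemma phi_eq_phr: "s \<ge> 0 \<Longrightarrow> phi s = ereal (phr s)"
  unfolding phr_def using finite admissible_phi_not_MInf[OF admissible, of s] by (cases "phi s") auto

lemma phr_one: "phr 1 = 0"
  unfolding phr_def using admissible_phi_one[OF admissible] by simp

lemma phr_convex:
  assumes "x \<ge> 0" "y \<ge> 0" "0 \<le> t" "t \<le> 1"
  shows "phr (t * x + (1 - t) * y) \<le> t * phr x + (1 - t) * phr y"
proof -
  have "t * x + (1 - t) * y \<ge> 0" using assms by auto
  then show ?thesis using admissible_phi_convex[OF admissible assms] phi_eq_phr assms by simp
qed

lemma phr_strictly_convex:
  assumes "x \<ge> 0" "y \<ge> 0" "x \<noteq> y" "0 < t" "t < 1"
  shows "phr (t * x + (1 - t) * y) < t * phr x + (1 - t) * phr y"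
proof -
  have "t * x + (1 - t) * y \<ge> 0" using assms by auto
  moreover have "phi (t * x + (1 - t) * y) < ereal t * phi x + ereal (1 - t) * phi y"
    using strictly_convex assms unfolding strictly_convex_ext_def by auto
  ultimately show ?thesis using phi_eq_phr assms by simp
qed

lemma continuous_on_phr: "continuous_on {0..} phr"
proof -
  have "convex_on {0<..} phr"
    by (rule convex_onI) (use phr_convex[of _ _ "1 - _"] in \<open>auto simp: convex_real_interval\<close>)
  then have interior: "continuous_on {0<..} phr" by (intro convex_on_continuous) auto
  have "(phi \<longlongrightarrow> phi 0) (at_right 0)" using admissible unfolding admissible_phi_def by auto
  moreover have "eventually (\<lambda>s. phi s = ereal (phr s)) (at_right (0::real))"
    unfolding eventually_at_right_field by (auto intro!: exI[of _ 1] phi_eq_phr)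
  ultimately have "((\<lambda>s. ereal (phr s)) \<longlongrightarrow> ereal (phr 0)) (at_right 0)"
    using phi_eq_phr[of 0] by (simp add: tendsto_cong)
  then have "(phr \<longlongrightarrow> phr 0) (at_right 0)" by (simp add: lim_ereal)
  moreover have "at (0::real) within {0..} = at_right 0"
  proof -
    have "{0::real..} - {0} = {0<..} - {0}" by auto
    then show ?thesis unfolding at_within_def by simp
  qed
  ultimately have "continuous (at 0 within {0..}) phr" unfolding continuous_within by simp
  moreover have "continuous (at x within {0..}) phr" if "x > 0" for x
    using interior that by (simp add: continuous_on_eq_continuous_at continuous_at_imp_continuous_within)
  ultimately show ?thesis unfolding continuous_on_eq_continuous_within
    by (metis atLeast_iff less_eq_real_def)
qed

lemma phr_superlinear: "\<exists>N. \<forall>u\<ge>N. R * u \<le> phr u"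
proof -
  have "eventually (\<lambda>x. ereal R < phi x / ereal x \<and> x > 0) at_top"
    using superlinear unfolding tendsto_PInfty by (auto intro: eventually_conj eventually_gt_at_top)
  then obtain N where N: "\<And>u. u \<ge> N \<Longrightarrow> ereal R < phi u / ereal u \<and> u > 0"
    unfolding eventually_at_top_linorder by auto
  have "R * u \<le> phr u" if "u \<ge> N" for u
  proof -
    from N[OF that] have "u > 0" "R < phr u / u" using phi_eq_phr[of u] by auto
    then show ?thesis by (simp add: field_simps)
  qed
  then show ?thesis by blast
qed

lemma phr_bounded_below: "\<exists>K\<ge>0. \<forall>s\<in>{0..1}. - K \<le> phr s"
proof -
  have "continuous_on {0..1} phr" using continuous_on_phr by (rule continuous_on_subset) auto
  then obtain s0 where "s0 \<in> {0..1}" "\<forall>y\<in>{0..1}. phr s0 \<le> phr y"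
    using continuous_attains_inf[of "{0..1::real}" phr] by auto
  then show ?thesis by (intro exI[of _ "\<bar>phr s0\<bar>"]) auto
qed

text \<open>\<open>bdiv x t\<close> is the \<open>\<phi>\<close>-divergence of a Bernoulli(\<open>t\<close>) law from a Bernoulli(\<open>x\<close>) law.\<close>

definition bdiv :: "real \<Rightarrow> real \<Rightarrow> real" where
  "bdiv x t = x * phr (t / x) + (1 - x) * phr ((1 - t) / (1 - x))"

lemma bdiv_ereal:
  assumes "0 < x" "x < 1" "0 \<le> t" "t \<le> 1"
  shows "ereal x * phi (t / x) + ereal (1 - x) * phi ((1 - t) / (1 - x)) = ereal (bdiv x t)"
  using assms phi_eq_phr[of "t / x"] phi_eq_phr[of "(1 - t) / (1 - x)"] unfolding bdiv_def by simp

lemma bdiv_self: "0 < x \<Longrightarrow> x < 1 \<Longrightarrow> bdiv x x = 0"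
  unfolding bdiv_def using phr_one by simp

lemma bdiv_one_one: "bdiv 1 1 = 0"
  unfolding bdiv_def using phr_one by simp

lemma bdiv_pos:
  assumes "0 < x" "x < 1" "0 \<le> t" "t \<le> 1" "t \<noteq> x"
  shows "bdiv x t > 0"
proof -
  have "t / x \<noteq> (1 - t) / (1 - x)"
  proof
    assume "t / x = (1 - t) / (1 - x)"
    then have "t * (1 - x) = x * (1 - t)" using assms by (simp add: field_simps)
    then show False using assms by (simp add: algebra_simps)
  qed
  then have "phr (x * (t / x) + (1 - x) * ((1 - t) / (1 - x))) < bdiv x t"
    unfolding bdiv_def using phr_strictly_convex[of "t / x" "(1 - t) / (1 - x)" x] assms by auto
  moreover have "x * (t / x) + (1 - x) * ((1 - t) / (1 - x)) = 1" using assms by simp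
  ultimately show ?thesis using phr_one by simp
qed

lemma bdiv_convex_right:
  assumes "0 < x" "x < 1" "0 \<le> a" "a \<le> 1" "0 \<le> b" "b \<le> 1" "0 \<le> l" "l \<le> 1"
  shows "bdiv x (l * a + (1 - l) * b) \<le> l * bdiv x a + (1 - l) * bdiv x b"
proof -
  have e1: "(l * a + (1 - l) * b) / x = l * (a / x) + (1 - l) * (b / x)"
    by (simp add: add_divide_distrib)
  have "1 - (l * a + (1 - l) * b) = l * (1 - a) + (1 - l) * (1 - b)" by (simp add: algebra_simps)
  then have e2: "(1 - (l * a + (1 - l) * b)) / (1 - x)
      = l * ((1 - a) / (1 - x)) + (1 - l) * ((1 - b) / (1 - x))"
    by (simp add: add_divide_distrib)
  have "bdiv x (l * a + (1 - l) * b) \<le> x * (l * phr (a / x) + (1 - l) * phr (b / x))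
      + (1 - x) * (l * phr ((1 - a) / (1 - x)) + (1 - l) * phr ((1 - b) / (1 - x)))"
    unfolding bdiv_def e1 e2 using assms by (intro add_mono mult_left_mono phr_convex) auto
  also have "\<dots> = l * bdiv x a + (1 - l) * bdiv x b" unfolding bdiv_def by (simp add: algebra_simps)
  finally show ?thesis .
qed

lemma bdiv_strict_mono_right:
  assumes "0 < x" "x < 1" "x \<le> a" "a < b" "b \<le> 1"
  shows "bdiv x a < bdiv x b"
proof (cases "a = x")
  case True
  then show ?thesis using bdiv_self bdiv_pos assms by auto
next
  case False
  define l where "l = (b - a) / (b - x)"
  have l: "0 < l" "l < 1" using assms False unfolding l_def by (auto simp: field_simps)
  have "l * x + (1 - l) * b = a" using convex_comb_eq[of x b a] assms unfolding l_def by auto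
  then have "bdiv x a \<le> l * bdiv x x + (1 - l) * bdiv x b"
    using bdiv_convex_right[of x x b l] assms l by auto
  also have "\<dots> < bdiv x b" using l bdiv_self bdiv_pos[of x b] assms by auto
  finally show ?thesis .
qed

lemma continuous_on_bdiv_right:
  assumes "0 < x" "x < 1"
  shows "continuous_on {0..1} (bdiv x)"
proof -
  have "continuous_on {0..1} (\<lambda>t. phr (t / x))" "continuous_on {0..1} (\<lambda>t. phr ((1 - t) / (1 - x)))"
    using assms by (intro continuous_on_compose2[OF continuous_on_phr] continuous_intros; force)+
  then show ?thesis unfolding bdiv_def by (intro continuous_intros)
qed

lemma perspective_convex:
  assumes "y1 > 0" "y2 \<ge> 0" "s \<ge> 0" "y2 > 0 \<or> s = 0" "0 \<le> l" "l \<le> 1"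
  shows "(l * y1 + (1 - l) * y2) * phr (s / (l * y1 + (1 - l) * y2))
           \<le> l * y1 * phr (s / y1) + (1 - l) * y2 * phr (s / y2)"
proof (cases "l = 0 \<or> s = 0")
  case True then show ?thesis by (auto simp: algebra_simps)
next
  case False
  then have l: "l > 0" and y2: "y2 > 0" using assms by auto
  define y where "y = l * y1 + (1 - l) * y2"
  have y: "y > 0" unfolding y_def using l assms by (simp add: add_pos_nonneg)
  define mu where "mu = l * y1 / y"
  have "l * y1 \<le> y" unfolding y_def using assms by simp
  then have mu: "0 \<le> mu" "mu \<le> 1" unfolding mu_def using y assms l by auto
  have ymu: "y * mu = l * y1" unfolding mu_def using y by simp
  have "y - l * y1 = (1 - l) * y2" by (simp add: y_def)
  then have ymu2: "y * (1 - mu) = (1 - l) * y2" using ymu by (simp add: right_diff_distrib)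
  have q1: "mu * (s / y1) = l * s / y" unfolding mu_def using assms y by simp
  have "1 - mu = (1 - l) * y2 / y" using ymu2 y by (simp add: eq_divide_eq mult.commute)
  then have q2: "(1 - mu) * (s / y2) = (1 - l) * s / y" using y2 y by simp
  have eq: "s / y = mu * (s / y1) + (1 - mu) * (s / y2)"
    unfolding q1 q2 by (simp add: add_divide_distrib[symmetric] algebra_simps)
  have "phr (s / y) \<le> mu * phr (s / y1) + (1 - mu) * phr (s / y2)"
    unfolding eq using mu assms y2 by (intro phr_convex) auto
  then have "y * phr (s / y) \<le> y * (mu * phr (s / y1) + (1 - mu) * phr (s / y2))"
    using y by (intro mult_left_mono) auto
  also have "\<dots> = (y * mu) * phr (s / y1) + (y * (1 - mu)) * phr (s / y2)"
    by (simp add: algebra_simps)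
  also have "\<dots> = l * y1 * phr (s / y1) + (1 - l) * y2 * phr (s / y2)"
    unfolding ymu ymu2 ..
  finally show ?thesis unfolding y_def .
qed

lemma bdiv_strict_antimono_left:
  assumes "0 < a" "a < b" "b \<le> t" "t \<le> 1" "b < 1"
  shows "bdiv b t < bdiv a t"
proof (cases "b = t")
  case True
  then show ?thesis using bdiv_self[of t] bdiv_pos[of a t] assms by auto
next
  case False
  define l where "l = (t - b) / (t - a)"
  have l: "0 < l" "l < 1" using assms False unfolding l_def by (auto simp: field_simps)
  have b: "b = l * a + (1 - l) * t" using convex_comb_eq[of a t b] assms unfolding l_def by auto
  have b': "1 - b = l * (1 - a) + (1 - l) * (1 - t)" unfolding b by (simp add: algebra_simps)
  have "b * phr (t / b) \<le> l * a * phr (t / a) + (1 - l) * t * phr (t / t)"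
    unfolding b using perspective_convex[of a t t l] assms l by auto
  moreover have "(1 - b) * phr ((1 - t) / (1 - b))
      \<le> l * (1 - a) * phr ((1 - t) / (1 - a)) + (1 - l) * (1 - t) * phr ((1 - t) / (1 - t))"
    unfolding b' using perspective_convex[of "1 - a" "1 - t" "1 - t" l] assms l by (cases "t = 1") auto
  ultimately have "bdiv b t
      \<le> l * bdiv a t + (1 - l) * (t * phr (t / t) + (1 - t) * phr ((1 - t) / (1 - t)))"
    unfolding bdiv_def by (simp add: algebra_simps)
  also have "\<dots> = l * bdiv a t"
    using phr_one assms by (cases "t = 1") auto
  also have "\<dots> < bdiv a t" using l bdiv_pos[of a t] assms by auto
  finally show ?thesis .
qed

lemma continuous_on_bdiv_left:
  assumes "0 < c" "0 \<le> t" "t \<le> 1" "d \<le> 1" "d < 1 \<or> t = 1"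
  shows "continuous_on {c..d} (\<lambda>x. bdiv x t)"
proof -
  have c1: "continuous_on {c..d} (\<lambda>x. phr (t / x))"
    using assms by (intro continuous_on_compose2[OF continuous_on_phr] continuous_intros) auto
  show ?thesis
  proof (cases "t = 1")
    case True
    then show ?thesis unfolding bdiv_def using c1 phr_one by (simp, intro continuous_intros c1)
  next
    case False
    then have "continuous_on {c..d} (\<lambda>x. phr ((1 - t) / (1 - x)))"
      using assms by (intro continuous_on_compose2[OF continuous_on_phr] continuous_intros) auto
    then show ?thesis unfolding bdiv_def by (intro continuous_intros c1)
  qed
qed

text \<open>Superlinearity makes the first summand \<open>x \<phi>(s/x)\<close> blow up as \<open>x \<down> 0\<close>, while the second
  stays bounded below.\<close>

lemma bdiv_unbounded_left:
  assumes "0 < s" "s \<le> 1"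
  shows "\<exists>x. 0 < x \<and> x < s \<and> bdiv x s > M"
proof -
  obtain K where K: "K \<ge> 0" "\<And>u. u \<in> {0..1} \<Longrightarrow> - K \<le> phr u" using phr_bounded_below by auto
  obtain N where N: "\<And>u. u \<ge> N \<Longrightarrow> ((\<bar>M\<bar> + K + 1) / s) * u \<le> phr u"
    using phr_superlinear by blast
  define x where "x = s / (\<bar>N\<bar> + 2)"
  have "s < s * (\<bar>N\<bar> + 2)" using assms by (simp add: distrib_left add_pos_nonneg)
  then have x: "0 < x" "x < s" unfolding x_def using assms by (auto simp: divide_less_eq)
  have "s / x = \<bar>N\<bar> + 2" unfolding x_def using assms by simp
  then have "x * (((\<bar>M\<bar> + K + 1) / s) * (s / x)) \<le> x * phr (s / x)"
    using N x by (intro mult_left_mono) auto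
  then have first: "\<bar>M\<bar> + K + 1 \<le> x * phr (s / x)" using x assms by simp
  have "(1 - s) / (1 - x) \<in> {0..1}" using x assms by (auto simp: field_simps)
  then have "(1 - x) * (- K) \<le> (1 - x) * phr ((1 - s) / (1 - x))"
    using K x assms by (intro mult_left_mono) auto
  moreover have "- K \<le> (1 - x) * (- K)" using x assms K by (simp add: algebra_simps)
  ultimately have "- K \<le> (1 - x) * phr ((1 - s) / (1 - x))" by linarith
  then have "M < bdiv x s" using first K unfolding bdiv_def by linarith
  then show ?thesis using x by blast
qed

lemma g_fun_eq_Sup:
  assumes "0 < x" "x < 1"
  shows "g_fun phi d x = Sup {t \<in> {x..1}. bdiv x t \<le> d}"
proof -
  have "{t \<in> {x..1}. ereal x * phi (t / x) + ereal (1 - x) * phi ((1 - t) / (1 - x)) \<le> ereal d}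
      = {t \<in> {x..1}. bdiv x t \<le> d}"
    using bdiv_ereal[OF assms] assms by force
  then show ?thesis unfolding g_fun_def using assms by simp
qed

lemma g_fun_ge:
  assumes "0 < x" "x < 1" "0 \<le> d"
  shows "x \<le> g_fun phi d x"
proof -
  have "x \<in> {t \<in> {x..1}. bdiv x t \<le> d}" using assms bdiv_self by auto
  moreover have "bdd_above {t \<in> {x..1}. bdiv x t \<le> d}" by (intro bdd_aboveI[of _ 1]) auto
  ultimately show ?thesis unfolding g_fun_eq_Sup[OF assms(1,2)] by (rule cSup_upper)
qed

lemma mono_g_fun_delta:
  assumes "0 < x" "x < 1"
  shows "mono_on {0<..} (\<lambda>d. g_fun phi d x)"
proof (rule mono_onI)
  fix r s :: real assume "r \<in> {0<..}" "r \<le> s"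
  then have "x \<in> {t \<in> {x..1}. bdiv x t \<le> r}" using assms bdiv_self by auto
  then show "g_fun phi r x \<le> g_fun phi s x"
    unfolding g_fun_eq_Sup[OF assms] using \<open>r \<le> s\<close>
    by (intro cSup_subset_mono) (auto intro: bdd_aboveI[of _ 1])
qed

lemma g_fun_eq_one:
  assumes "0 < x" "x < 1" "bdiv x 1 \<le> d"
  shows "g_fun phi d x = 1"
  unfolding g_fun_eq_Sup[OF assms(1,2)] using assms by (intro cSup_eq_maximum) auto

lemma g_fun_eq_level:
  assumes "0 < x" "x < 1" "x \<le> s" "s \<le> 1" "bdiv x s = d"
  shows "g_fun phi d x = s"
  unfolding g_fun_eq_Sup[OF assms(1,2)]
proof (rule cSup_eq_maximum)
  show "s \<in> {t \<in> {x..1}. bdiv x t \<le> d}" using assms by auto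
  show "t \<le> s" if "t \<in> {t \<in> {x..1}. bdiv x t \<le> d}" for t
  proof (rule ccontr)
    assume "\<not> t \<le> s"
    then show False using that bdiv_strict_mono_right[of x s t] assms by auto
  qed
qed

lemma g_fun_level_crossing:
  assumes "0 < x" "x < 1" "0 < d" "d < bdiv x 1"
  shows "\<exists>s. x < s \<and> s < 1 \<and> bdiv x s = d \<and> g_fun phi d x = s"
proof -
  have "continuous_on {x..1} (bdiv x)"
    using continuous_on_bdiv_right[OF assms(1,2)] by (rule continuous_on_subset) (use assms in auto)
  then obtain s where s: "x \<le> s" "s \<le> 1" "bdiv x s = d"
    using IVT'[of "bdiv x" x d 1] bdiv_self[OF assms(1,2)] assms by auto
  moreover have "s \<noteq> x" "s \<noteq> 1" using s bdiv_self[OF assms(1,2)] assms by auto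
  ultimately show ?thesis using g_fun_eq_level[OF assms(1,2) s] by (intro exI[of _ s]) auto
qed

lemma g_fun_gt:
  assumes "0 < x" "x < 1" "0 < d"
  shows "x < g_fun phi d x"
  using g_fun_eq_one[OF assms(1,2)] g_fun_level_crossing[OF assms] assms
  by (cases "bdiv x 1 \<le> d") auto

lemma g_fun_tendsto_delta_zero:
  assumes "0 < x" "x < 1"
  shows "((\<lambda>d. g_fun phi d x) \<longlongrightarrow> x) (at_right 0)"
proof (rule order_tendstoI)
  fix a assume "a < x"
  then show "eventually (\<lambda>d. a < g_fun phi d x) (at_right 0)"
    unfolding eventually_at_right_field using g_fun_ge[OF assms]
    by (intro exI[of _ 1]) (auto intro: less_le_trans)
next
  fix b assume "x < b"
  define s where "s = min ((x + b) / 2) ((x + 1) / 2)"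
  have s: "x < s" "s < 1" "s < b" unfolding s_def using assms \<open>x < b\<close> by (auto simp: min_def)
  have "g_fun phi d x < b" if d: "0 < d" "d < bdiv x s" for d
  proof -
    have "d < bdiv x 1" using d bdiv_strict_mono_right[of x s 1] assms s by linarith
    then obtain s' where s': "x < s'" "s' < 1" "bdiv x s' = d" "g_fun phi d x = s'"
      using g_fun_level_crossing[OF assms d(1)] by blast
    have "s' < s"
    proof (rule ccontr)
      assume "\<not> s' < s"
      then have "bdiv x s \<le> bdiv x s'"
        using bdiv_strict_mono_right[of x s s'] s s' assms by (cases "s = s'") auto
      then show False using d s' by simp
    qed
    then show ?thesis using s s' by simp
  qed
  then show "eventually (\<lambda>d. g_fun phi d x < b) (at_right 0)"
    unfolding eventually_at_right_field using bdiv_pos[of x s] s assms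
    by (intro exI[of _ "bdiv x s"]) auto
qed

lemma bdiv_one_ereal:
  "0 < y \<Longrightarrow> y < 1 \<Longrightarrow> ereal y * phi (1 / y) + ereal (1 - y) * phi 0 = ereal (bdiv y 1)"
  using bdiv_ereal[of y 1] by simp

lemma bdiv_one_strict_antimono:
  assumes "0 < a" "a < b" "b \<le> 1"
  shows "bdiv b 1 < bdiv a 1"
  using bdiv_one_one bdiv_pos[of a 1] bdiv_strict_antimono_left[of a b 1] assms
  by (cases "b = 1") auto

lemma inj_on_bdiv_one: "inj_on (\<lambda>y. bdiv y 1) {0<..<1}"
proof (rule inj_onI)
  fix y z assume "y \<in> {0<..<1}" "z \<in> {0<..<1}" "bdiv y 1 = bdiv z 1"
  then show "y = z"
    using bdiv_one_strict_antimono[of y z] bdiv_one_strict_antimono[of z y]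
    by (cases y z rule: linorder_cases) auto
qed

lemma bdiv_one_level_exists:
  assumes "0 < \<delta>"
  shows "\<exists>x. 0 < x \<and> x < 1 \<and> bdiv x 1 = \<delta>"
proof -
  obtain y where y: "0 < y" "y < 1" "\<delta> < bdiv y 1" using bdiv_unbounded_left[of 1 \<delta>] by auto
  have "continuous_on {y..1} (\<lambda>x. bdiv x 1)" using y by (intro continuous_on_bdiv_left) auto
  then obtain x where "y \<le> x" "x \<le> 1" "bdiv x 1 = \<delta>"
    using IVT2'[of "\<lambda>x. bdiv x 1" 1 \<delta> y] y bdiv_one_one assms by auto
  then show ?thesis using y bdiv_one_one assms by (intro exI[of _ x]) (auto simp: less_le)
qed

context
  fixes x\<^sub>\<delta> \<delta> :: real
  assumes x\<^sub>\<delta>: "0 < x\<^sub>\<delta>" "x\<^sub>\<delta> < 1" and level: "bdiv x\<^sub>\<delta> 1 = \<delta>"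
begin

lemma delta_pos: "0 < \<delta>"
  using bdiv_pos[of x\<^sub>\<delta> 1] x\<^sub>\<delta> level by simp

lemma g_fun_eq_one_above:
  assumes "x \<in> {x\<^sub>\<delta>..1}"
  shows "g_fun phi \<delta> x = 1"
proof (cases "x = 1")
  case True then show ?thesis by (simp add: g_fun_def)
next
  case False
  then have "bdiv x 1 \<le> \<delta>"
    using bdiv_one_strict_antimono[of x\<^sub>\<delta> x] assms x\<^sub>\<delta> level by (cases "x = x\<^sub>\<delta>") auto
  then show ?thesis using g_fun_eq_one assms False x\<^sub>\<delta> by auto
qed

lemma bdiv_one_gt_below: "0 < x \<Longrightarrow> x < x\<^sub>\<delta> \<Longrightarrow> \<delta> < bdiv x 1"
  using bdiv_one_strict_antimono[of x x\<^sub>\<delta>] x\<^sub>\<delta> level by auto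

text \<open>Below \<open>x\<^sub>\<delta>\<close>, \<open>g_fun \<phi> \<delta> x\<close> is the point \<open>s\<close> where \<open>bdiv x\<close> crosses level \<open>\<delta>\<close>; for \<open>y > x\<close>
  we have \<open>bdiv y s < bdiv x s = \<delta>\<close>, so the crossing for \<open>y\<close> lies beyond \<open>s\<close>.\<close>

lemma g_fun_strict_mono_below:
  assumes "0 \<le> x" "x < y" "y \<le> x\<^sub>\<delta>"
  shows "g_fun phi \<delta> x < g_fun phi \<delta> y"
proof (cases "x = 0")
  case True
  then show ?thesis using g_fun_gt[of y \<delta>] delta_pos assms x\<^sub>\<delta> by (simp add: g_fun_def)
next
  case False
  then have x: "0 < x" "x < 1" and y: "0 < y" "y < 1" using assms x\<^sub>\<delta> by auto
  obtain s where s: "x < s" "s < 1" "bdiv x s = \<delta>" "g_fun phi \<delta> x = s"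
    using g_fun_level_crossing[OF x delta_pos bdiv_one_gt_below] x assms by auto
  show ?thesis
  proof (cases "s \<le> y")
    case True then show ?thesis using g_fun_gt[OF y delta_pos] s by simp
  next
    case False
    then have below: "bdiv y s < \<delta>"
      using bdiv_strict_antimono_left[of x y s] x y s assms by auto
    show ?thesis
    proof (cases "bdiv y 1 \<le> \<delta>")
      case True then show ?thesis using g_fun_eq_one[OF y True] s by simp
    next
      case False
      then obtain s' where s': "y < s'" "s' < 1" "bdiv y s' = \<delta>" "g_fun phi \<delta> y = s'"
        using g_fun_level_crossing[OF y delta_pos] by auto
      have "s < s'"
      proof (rule ccontr)
        assume "\<not> s < s'"
        then have "bdiv y s' \<le> bdiv y s"
          using bdiv_strict_mono_right[of y s' s] y s' s by (cases "s = s'") auto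
        then show False using below s' by simp
      qed
      then show ?thesis using s s' by simp
    qed
  qed
qed

lemma g_fun_surj_below:
  assumes "0 < z" "z < 1"
  shows "\<exists>y. 0 < y \<and> y < x\<^sub>\<delta> \<and> g_fun phi \<delta> y = z"
proof -
  obtain x0 where x0: "0 < x0" "x0 < z" "\<delta> < bdiv x0 z"
    using bdiv_unbounded_left[of z \<delta>] assms by auto
  have "continuous_on {x0..z} (\<lambda>x. bdiv x z)" using x0 assms by (intro continuous_on_bdiv_left) auto
  then obtain y where y: "x0 \<le> y" "y \<le> z" "bdiv y z = \<delta>"
    using IVT2'[of "\<lambda>x. bdiv x z" z \<delta> x0] x0 assms bdiv_self[of z] delta_pos by auto
  have "y \<noteq> z" using y bdiv_self[of z] assms delta_pos by auto
  then have y': "0 < y" "y < 1" "y < z" using y x0 assms by auto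
  have "g_fun phi \<delta> y = z" using g_fun_eq_level[of y z \<delta>] y y' assms by auto
  moreover have "y < x\<^sub>\<delta>"
    using g_fun_eq_one_above[of y] y' \<open>g_fun phi \<delta> y = z\<close> assms by (cases "y < x\<^sub>\<delta>") auto
  ultimately show ?thesis using y' by blast
qed

lemma continuous_on_g_fun_below: "continuous_on {0..x\<^sub>\<delta>} (g_fun phi \<delta>)"
proof (rule continuous_on_mono_onto_Icc)
  show mono: "mono_on {0..x\<^sub>\<delta>} (g_fun phi \<delta>)"
    by (rule mono_onI) (use g_fun_strict_mono_below in \<open>force simp: order_le_less\<close>)
  have ends: "g_fun phi \<delta> 0 = 0" "g_fun phi \<delta> x\<^sub>\<delta> = 1"
    using g_fun_eq_one_above x\<^sub>\<delta> by (simp_all add: g_fun_def[of _ _ 0])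
  have "{0..1} \<subseteq> g_fun phi \<delta> ` {0..x\<^sub>\<delta>}"
  proof
    fix z :: real assume "z \<in> {0..1}"
    then consider "z = 0" | "z = 1" | "0 < z" "z < 1" by force
    then show "z \<in> g_fun phi \<delta> ` {0..x\<^sub>\<delta>}"
    proof cases
      case 3 then show ?thesis using g_fun_surj_below by force
    qed (use ends x\<^sub>\<delta> in force)+
  qed
  moreover have "g_fun phi \<delta> ` {0..x\<^sub>\<delta>} \<subseteq> {0..1}"
  proof
    fix z assume "z \<in> g_fun phi \<delta> ` {0..x\<^sub>\<delta>}"
    then obtain v where "v \<in> {0..x\<^sub>\<delta>}" "z = g_fun phi \<delta> v" by auto
    then show "z \<in> {0..1}"
      using mono_onD[OF mono, of 0 v] mono_onD[OF mono, of v x\<^sub>\<delta>] ends x\<^sub>\<delta> by auto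
  qed
  ultimately show "g_fun phi \<delta> ` {0..x\<^sub>\<delta>} = {g_fun phi \<delta> 0..g_fun phi \<delta> x\<^sub>\<delta>}"
    using ends by auto
qed

end

lemma g_fun_threshold:
  assumes "0 < \<delta>"
  shows "\<exists>x\<delta>. x\<delta> \<in> {0<..<1} \<and>
           ereal x\<delta> * phi (1 / x\<delta>) + ereal (1 - x\<delta>) * phi 0 = ereal \<delta> \<and>
           (\<forall>y\<in>{0<..<1}. ereal y * phi (1 / y) + ereal (1 - y) * phi 0 = ereal \<delta> \<longrightarrow> y = x\<delta>) \<and>
           continuous_on {0..x\<delta>} (g_fun phi \<delta>) \<and>
           strict_mono_on {0..x\<delta>} (g_fun phi \<delta>) \<and>
           (\<forall>x\<in>{x\<delta>..1}. g_fun phi \<delta> x = 1)"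
proof -
  obtain x\<^sub>\<delta> where x\<^sub>\<delta>: "0 < x\<^sub>\<delta>" "x\<^sub>\<delta> < 1" "bdiv x\<^sub>\<delta> 1 = \<delta>"
    using bdiv_one_level_exists[OF assms] by blast
  show ?thesis
  proof (intro exI[of _ x\<^sub>\<delta>] conjI ballI impI)
    show "x\<^sub>\<delta> \<in> {0<..<1}" using x\<^sub>\<delta> by simp
    show "ereal x\<^sub>\<delta> * phi (1 / x\<^sub>\<delta>) + ereal (1 - x\<^sub>\<delta>) * phi 0 = ereal \<delta>"
      using bdiv_one_ereal x\<^sub>\<delta> by simp
    show "y = x\<^sub>\<delta>" if "y \<in> {0<..<1}" "ereal y * phi (1 / y) + ereal (1 - y) * phi 0 = ereal \<delta>" for y
      using inj_onD[OF inj_on_bdiv_one, of y x\<^sub>\<delta>] bdiv_one_ereal that x\<^sub>\<delta> by simp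
    show "continuous_on {0..x\<^sub>\<delta>} (g_fun phi \<delta>)" by (rule continuous_on_g_fun_below[OF x\<^sub>\<delta>])
    show "strict_mono_on {0..x\<^sub>\<delta>} (g_fun phi \<delta>)"
      using g_fun_strict_mono_below[OF x\<^sub>\<delta>] by (intro strict_mono_onI) auto
    show "g_fun phi \<delta> x = 1" if "x \<in> {x\<^sub>\<delta>..1}" for x
      by (rule g_fun_eq_one_above[OF x\<^sub>\<delta> that])
  qed
qed

end

theorem mainTheorem5:
  fixes P :: "'a measure" and phi :: "real \<Rightarrow> ereal" and \<delta> :: real
  assumes "prob_space P" and "\<delta> > 0" and "admissible_phi phi"
  shows "(\<forall>A\<in>sets P. upper_prob phi P \<delta> A = g_fun phi \<delta> (measure P A)) \<and>
         ((\<forall>x\<ge>0. phi x \<noteq> \<infinity>) \<and> strictly_convex_ext phi \<and>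
          ((\<lambda>x. phi x / ereal x) \<longlongrightarrow> \<infinity>) at_top \<longrightarrow>
          (\<exists>x\<delta>. x\<delta> \<in> {0<..<1} \<and>
              ereal x\<delta> * phi (1 / x\<delta>) + ereal (1 - x\<delta>) * phi 0 = ereal \<delta> \<and>
              (\<forall>y\<in>{0<..<1}. ereal y * phi (1 / y) + ereal (1 - y) * phi 0 = ereal \<delta> \<longrightarrow> y = x\<delta>) \<and>
              continuous_on {0..x\<delta>} (g_fun phi \<delta>) \<and>
              strict_mono_on {0..x\<delta>} (g_fun phi \<delta>) \<and>
              (\<forall>x\<in>{x\<delta>..1}. g_fun phi \<delta> x = 1)) \<and>
          (\<forall>x\<in>{0<..<1}. g_fun phi \<delta> x > x \<and>
              mono_on {0<..} (\<lambda>d. g_fun phi d x) \<and>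
              ((\<lambda>d. g_fun phi d x) \<longlongrightarrow> x) (at_right 0)))"
proof (intro conjI impI ballI)
  show "upper_prob phi P \<delta> A = g_fun phi \<delta> (measure P A)" if "A \<in> sets P" for A
    using upper_prob_eq_g_fun[OF assms that] .
  assume "(\<forall>x\<ge>0. phi x \<noteq> \<infinity>) \<and> strictly_convex_ext phi \<and> ((\<lambda>x. phi x / ereal x) \<longlongrightarrow> \<infinity>) at_top"
  then interpret regular_phi phi using assms(3) by unfold_locales auto
  show "\<exists>x\<delta>. x\<delta> \<in> {0<..<1} \<and>
          ereal x\<delta> * phi (1 / x\<delta>) + ereal (1 - x\<delta>) * phi 0 = ereal \<delta> \<and>
          (\<forall>y\<in>{0<..<1}. ereal y * phi (1 / y) + ereal (1 - y) * phi 0 = ereal \<delta> \<longrightarrow> y = x\<delta>) \<and>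
          continuous_on {0..x\<delta>} (g_fun phi \<delta>) \<and> strict_mono_on {0..x\<delta>} (g_fun phi \<delta>) \<and>
          (\<forall>x\<in>{x\<delta>..1}. g_fun phi \<delta> x = 1)"
    by (rule g_fun_threshold[OF assms(2)])
  fix x :: real assume "x \<in> {0<..<1}"
  then have x: "0 < x" "x < 1" by auto
  show "g_fun phi \<delta> x > x" by (rule g_fun_gt[OF x assms(2)])
  show "mono_on {0<..} (\<lambda>d. g_fun phi d x)" by (rule mono_g_fun_delta[OF x])
  show "((\<lambda>d. g_fun phi d x) \<longlongrightarrow> x) (at_right 0)" by (rule g_fun_tendsto_delta_zero[OF x])
qed

end
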